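(* Let $1\le k\le n$ and let $t$ be an integer with $0\le t\le (k-1)(n-k)$ (the number of $-1$ entries of $F_n^k$). Then there exist an $n\times n$ ASM $A_k$ with exactly $t$ entries equal to $-1$ and $n\times n$ permutation matrices $P_1,\ldots,P_{k-1},P_{k+1},\ldots,P_n$ such that $[P_1,\ldots,P_{k-1},A_k,P_{k+1},\ldots,P_n]$ is an $n\times n\times n$ ASHM.
   Context: An $n\times n$ alternating sign matrix (ASM) is an $n\times n$ matrix with entries in $\{0,1,-1\}$ such that in every row and column the nonzeros alternate in sign, beginning and ending with $+1$. An $n\times n\times n$ hypermatrix $[A_1,\ldots,A_n]$ ($A_s$ the horizontal planes) is an ASHM if all entries are in $\{0,\pm1\}$ and in every line (obtained by fixing two of the three indices) the nonzeros alternate in sign beginning and ending with $+1$. For $1\le k\le n$, $F_n^k=[f_{ij}]$ is the $n\times n$ matrix with $f_{ij}=(-1)^{i+j+k+1}$ if $k+1\le i+j\le 2n+1-k$ and $|i-j|\le k-1$, and $f_{ij}=0$ otherwise; it is an ASM with $(k-1)(n-k)$ entries equal to $-1$. *)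

theory Defs
  imports Main
begin

text \<open>Indices are 0-based: an n x n matrix is a function nat => nat => int,
  only entries with indices < n matter. An n x n x n hypermatrix is
  H :: nat => nat => nat => int, where H s is the s-th horizontal plane A_s.\<close>

definition alt_sign_seq :: "int list \<Rightarrow> bool" where
  "alt_sign_seq xs \<longleftrightarrow>
     (let ys = filter (\<lambda>x. x \<noteq> 0) xs in
        ys \<noteq> [] \<and> odd (length ys) \<and> (\<forall>i < length ys. ys ! i = (-1) ^ i))"

definition is_ASM :: "nat \<Rightarrow> (nat \<Rightarrow> nat \<Rightarrow> int) \<Rightarrow> bool" where
  "is_ASM n A \<longleftrightarrow>
     (\<forall>i < n. \<forall>j < n. A i j \<in> {-1, 0, 1}) \<and>
     (\<forall>i < n. alt_sign_seq (map (\<lambda>j. A i j) [0..<n])) \<and>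
     (\<forall>j < n. alt_sign_seq (map (\<lambda>i. A i j) [0..<n]))"

definition is_perm_matrix :: "nat \<Rightarrow> (nat \<Rightarrow> nat \<Rightarrow> int) \<Rightarrow> bool" where
  "is_perm_matrix n P \<longleftrightarrow>
     (\<forall>i < n. \<forall>j < n. P i j \<in> {0, 1}) \<and>
     (\<forall>i < n. card {j. j < n \<and> P i j = 1} = 1) \<and>
     (\<forall>j < n. card {i. i < n \<and> P i j = 1} = 1)"

definition is_ASHM :: "nat \<Rightarrow> (nat \<Rightarrow> nat \<Rightarrow> nat \<Rightarrow> int) \<Rightarrow> bool" where
  "is_ASHM n H \<longleftrightarrow>
     (\<forall>s < n. \<forall>i < n. \<forall>j < n. H s i j \<in> {-1, 0, 1}) \<and>
     (\<forall>s < n. \<forall>i < n. alt_sign_seq (map (\<lambda>j. H s i j) [0..<n])) \<and>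
     (\<forall>s < n. \<forall>j < n. alt_sign_seq (map (\<lambda>i. H s i j) [0..<n])) \<and>
     (\<forall>i < n. \<forall>j < n. alt_sign_seq (map (\<lambda>s. H s i j) [0..<n]))"

definition num_neg_ones :: "nat \<Rightarrow> (nat \<Rightarrow> nat \<Rightarrow> int) \<Rightarrow> nat" where
  "num_neg_ones n A = card {(i, j). i < n \<and> j < n \<and> A i j = -1}"

end

theory Submission
  imports Defs
begin

text \<open>
  Put a = min (k - 1) (n - k) and write t = w (n - 1 - w) - d with w \<le> a and 2 w + d < n.
  The matrix A_k is F_n^(w+1) with d of its entries -1 removed. Its entries -1 lie on the
  w cyclic diagonals i - j = 1 + 2 y - w (mod n), y < w, and its entries +1 on at most w + 2
  other cyclic diagonals, so the 0-1 circulant matrix M supported on a suitable set of a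
  diagonals is a-regular, equal to 1 at every -1 of A_k and to 0 at every +1. Taking L = M if
  a = k - 1 and L = J - A_k - M if a = n - k gives a (k - 1)-regular 0-1 matrix L with these
  properties, and then U = J - A_k - L is an (n - k)-regular 0-1 matrix. By Hall's theorem
  L and U are sums of k - 1 and n - k permutation matrices. Stacking the first below A_k and
  the second above it gives an ASHM: each vertical line reads L_ij ones, then the entry of
  A_k, then U_ij ones, and L_ij + A_ij + U_ij = 1.
\<close>

section \<open>Alternating sign sequences\<close>

lemma alt_sign_seq_iff:
  "alt_sign_seq xs \<longleftrightarrow> (\<exists>m. odd m \<and> filter (\<lambda>x. x \<noteq> 0) xs = map (\<lambda>i. (-1) ^ i) [0..<m])"
proof
  assume "alt_sign_seq xs"
  then show "\<exists>m. odd m \<and> filter (\<lambda>x. x \<noteq> 0) xs = map (\<lambda>i. (-1) ^ i) [0..<m]"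
    unfolding alt_sign_seq_def Let_def by (auto intro!: nth_equalityI)
qed (auto simp: alt_sign_seq_def odd_pos)

lemma sum_list_alternating: "sum_list (map (\<lambda>i. (-1::int) ^ i) [0..<m]) = of_bool (odd m)"
  by (induction m) auto

lemma sum_list_filter_nonzero: "sum_list (filter (\<lambda>x. x \<noteq> 0) xs) = sum_list (xs :: int list)"
  by (induction xs) auto

lemma alt_sign_seq_sum_list: "alt_sign_seq xs \<Longrightarrow> sum_list xs = 1"
proof -
  assume "alt_sign_seq xs"
  then obtain m where "odd m" "filter (\<lambda>x. x \<noteq> 0) xs = map (\<lambda>i. (-1) ^ i) [0..<m]"
    unfolding alt_sign_seq_iff by blast
  then show "sum_list xs = 1"
    using sum_list_filter_nonzero[of xs] sum_list_alternating[of m] by simp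
qed

lemma filter_nonzero_01:
  "set xs \<subseteq> {0, 1::int} \<Longrightarrow> filter (\<lambda>x. x \<noteq> 0) xs = replicate (nat (sum_list xs)) 1"
proof (induction xs)
  case (Cons x xs)
  moreover have "sum_list xs \<ge> 0" using Cons.prems by (intro sum_list_nonneg) auto
  ultimately show ?case by (auto simp: nat_add_distrib)
qed simp

lemma alt_sign_seq_stack:
  fixes xs ys :: "int list"
  assumes "set xs \<subseteq> {0, 1}" "set ys \<subseteq> {0, 1}" "sum_list xs \<le> 1" "sum_list ys \<le> 1"
    and "x + sum_list xs + sum_list ys = 1"
  shows "alt_sign_seq (xs @ x # ys)"
proof -
  note filters = filter_nonzero_01[OF assms(1)] filter_nonzero_01[OF assms(2)]
  have "sum_list xs \<ge> 0" "sum_list ys \<ge> 0" using assms(1,2) by (auto intro!: sum_list_nonneg)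
  then consider "sum_list xs = 0" "sum_list ys = 0" "x = 1" | "sum_list xs = 1" "sum_list ys = 0" "x = 0"
    | "sum_list xs = 0" "sum_list ys = 1" "x = 0" | "sum_list xs = 1" "sum_list ys = 1" "x = -1"
    using assms(3-5) by linarith
  then have "\<exists>m. odd m \<and> filter (\<lambda>x. x \<noteq> 0) (xs @ x # ys) = map (\<lambda>i. (-1) ^ i) [0..<m]"
  proof cases
    case 4
    then show ?thesis using filters by (intro exI[of _ 3]) (simp add: numeral_3_eq_3)
  qed (use filters in \<open>auto intro!: exI[of _ 1]\<close>)
  then show ?thesis unfolding alt_sign_seq_iff .
qed

lemma alt_sign_seq_01:
  "set xs \<subseteq> {0, 1::int} \<Longrightarrow> sum_list xs = 1 \<Longrightarrow> alt_sign_seq xs"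
  unfolding alt_sign_seq_iff by (auto simp: filter_nonzero_01 intro!: exI[of _ 1])

definition alt_block :: "nat \<Rightarrow> nat \<Rightarrow> nat \<Rightarrow> int" where
  "alt_block lo hi j = (if lo \<le> j \<and> j \<le> hi then (if even (j + lo) then 1 else -1) else 0)"

lemma upt_split: "a \<le> b \<Longrightarrow> b \<le> c \<Longrightarrow> [a..<c] = [a..<b] @ [b..<c]"
  using upt_add_eq_append[of a b "c - b"] by simp

lemma filter_nonzero_alt_block:
  assumes "a \<le> lo" "lo \<le> hi" "hi < b"
  shows "filter (\<lambda>x. x \<noteq> 0) (map (alt_block lo hi) [a..<b]) = map (\<lambda>i. (-1) ^ i) [0..<Suc hi - lo]"
proof -
  have split: "[a..<b] = [a..<lo] @ [lo..<Suc hi] @ [Suc hi..<b]"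
    using assms upt_split[of a lo b] upt_split[of lo "Suc hi" b] by (simp del: upt_Suc)
  have "filter (\<lambda>x. x \<noteq> 0) (map (alt_block lo hi) [a..<lo]) = []"
    "filter (\<lambda>x. x \<noteq> 0) (map (alt_block lo hi) [Suc hi..<b]) = []"
    by (auto simp: filter_empty_conv alt_block_def)
  moreover have "map (alt_block lo hi) [lo..<Suc hi] = map (\<lambda>i. (-1) ^ i) [0..<Suc hi - lo]"
    by (rule nth_equalityI) (auto simp: alt_block_def minus_one_power_iff simp del: upt_Suc)
  moreover have "filter (\<lambda>x. x \<noteq> 0) (map (\<lambda>i. (-1::int) ^ i) xs) = map (\<lambda>i. (-1) ^ i) xs" for xs
    by (simp add: filter_id_conv)
  ultimately show ?thesis unfolding split by simp
qed

lemma alt_sign_seq_alt_block: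
  assumes "lo \<le> hi" "hi < n" "even (hi + lo)"
  shows "alt_sign_seq (map (alt_block lo hi) [0..<n])"
  unfolding alt_sign_seq_iff using assms
  by (intro exI[of _ "Suc hi - lo"]) (simp add: filter_nonzero_alt_block del: upt_Suc)

lemma alt_sign_seq_one_then_neg_alt_block:
  assumes "1 \<le> lo" "lo \<le> hi" "hi < n" "odd (hi + lo)"
  shows "alt_sign_seq (map (\<lambda>j. if j = 0 then 1 else - alt_block lo hi j) [0..<n])"
proof -
  have "map (\<lambda>j. if j = 0 then 1 else - alt_block lo hi j) [0..<n]
      = 1 # map uminus (map (alt_block lo hi) [1..<n])"
    using assms by (simp add: upt_conv_Cons del: upt_Suc)
  then have "filter (\<lambda>x. x \<noteq> 0) (map (\<lambda>j. if j = 0 then 1 else - alt_block lo hi j) [0..<n])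
      = 1 # map uminus (filter (\<lambda>x. x \<noteq> 0) (map (alt_block lo hi) [1..<n]))"
    by (simp add: filter_map comp_def del: upt_Suc)
  also have "\<dots> = map (\<lambda>i. (-1) ^ i) [0..<Suc (Suc hi - lo)]"
    using assms by (simp add: filter_nonzero_alt_block map_upt_Suc del: upt_Suc)
  finally show ?thesis
    unfolding alt_sign_seq_iff using assms by (intro exI[of _ "Suc (Suc hi - lo)"]) simp
qed

section \<open>Regular 0-1 matrices and Hall's theorem\<close>

definition regular_01_matrix :: "nat \<Rightarrow> nat \<Rightarrow> (nat \<Rightarrow> nat \<Rightarrow> int) \<Rightarrow> bool" where
  "regular_01_matrix n r M \<longleftrightarrow>
     (\<forall>i<n. \<forall>j<n. M i j \<in> {0, 1}) \<and>
     (\<forall>i<n. (\<Sum>j<n. M i j) = int r) \<and> (\<forall>j<n. (\<Sum>i<n. M i j) = int r)"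

lemma sum_01_eq_card:
  assumes "finite A" "\<forall>x\<in>A. f x \<in> {0, 1::int}"
  shows "sum f A = int (card {x\<in>A. f x = 1})"
proof -
  have "sum f A = (\<Sum>x\<in>A. of_bool (f x = 1))"
    using assms(2) by (intro sum.cong) auto
  then show ?thesis using assms(1) by (simp add: Collect_conj_eq Int_commute)
qed

lemma is_perm_matrix_iff_regular: "is_perm_matrix n P \<longleftrightarrow> regular_01_matrix n 1 P"
proof -
  have "(\<Sum>j<n. P i j) = int (card {j. j < n \<and> P i j = 1})"
    "(\<Sum>j<n. P j i) = int (card {j. j < n \<and> P j i = 1})"
    if "\<forall>i<n. \<forall>j<n. P i j \<in> {0, 1}" "i < n" for i
    using that by (simp_all add: sum_01_eq_card)
  then show ?thesis
    unfolding is_perm_matrix_def regular_01_matrix_def by auto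
qed

lemma is_perm_matrix_bij:
  assumes "bij_betw f {..<n} {..<n}"
  shows "is_perm_matrix n (\<lambda>i j. of_bool (j = f i))"
  unfolding is_perm_matrix_def
proof (intro conjI allI impI)
  fix i assume "i < n"
  then have "{j. j < n \<and> of_bool (j = f i) = (1::int)} = {f i}"
    using assms by (auto simp: bij_betw_def)
  then show "card {j. j < n \<and> of_bool (j = f i) = (1::int)} = 1" by simp
next
  fix j assume "j < n"
  then obtain i0 where "i0 < n" "f i0 = j"
    using assms by (metis bij_betw_imp_surj_on imageE lessThan_iff)
  then have "{i. i < n \<and> of_bool (j = f i) = (1::int)} = {i0}"
    using assms by (auto simp: bij_betw_def dest: inj_onD)
  then show "card {i. i < n \<and> of_bool (j = f i) = (1::int)} = 1" by simp
qed auto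

definition hall_condition :: "'a set \<Rightarrow> ('a \<Rightarrow> 'b set) \<Rightarrow> bool" where
  "hall_condition I S \<longleftrightarrow> (\<forall>J\<subseteq>I. card J \<le> card (\<Union>(S ` J)))"

lemma hall_condition_Diff_critical:
  assumes fin: "finite I" "\<forall>i\<in>I. finite (S i)" and hall: "hall_condition I S"
    and J: "J \<subseteq> I" "card (\<Union>(S ` J)) = card J"
  shows "hall_condition (I - J) (\<lambda>i. S i - \<Union>(S ` J))"
  unfolding hall_condition_def
proof (intro allI impI)
  fix K assume K: "K \<subseteq> I - J"
  let ?T = "\<Union>(S ` J)" and ?U = "\<Union>i\<in>K. S i - \<Union>(S ` J)"
  have "finite K" "finite J" using K J fin(1) by (auto intro: finite_subset)
  then have finite: "finite K" "finite J" "finite ?T" "finite ?U" using K J fin(2) by blast+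
  have "card K + card J = card (K \<union> J)"
    using K finite by (subst card_Un_disjoint) auto
  also have "\<dots> \<le> card (\<Union>(S ` (K \<union> J)))"
    using hall K J unfolding hall_condition_def by (meson Diff_subset le_supI subset_trans)
  also have "\<Union>(S ` (K \<union> J)) = ?U \<union> ?T" by auto
  also have "card (?U \<union> ?T) = card ?U + card J"
    using finite J(2) by (subst card_Un_disjoint) auto
  finally show "card K \<le> card ?U" by simp
qed

lemma hall_condition_Diff_point:
  assumes fin: "finite I" "\<forall>i\<in>I. finite (S i)" and hall: "hall_condition I S" and "i0 \<in> I"
    and surplus: "\<forall>K\<subseteq>I. K \<noteq> {} \<longrightarrow> K \<noteq> I \<longrightarrow> card (\<Union>(S ` K)) \<noteq> card K"
  shows "hall_condition (I - {i0}) (\<lambda>i. S i - {x})"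
  unfolding hall_condition_def
proof (intro allI impI)
  fix K assume K: "K \<subseteq> I - {i0}"
  show "card K \<le> card (\<Union>i\<in>K. S i - {x})"
  proof (cases "K = {}")
    case False
    have "K \<subseteq> I" "K \<noteq> I" using K \<open>i0 \<in> I\<close> by auto
    then have "card K < card (\<Union>(S ` K))"
      using hall surplus False unfolding hall_condition_def by (metis le_neq_implies_less)
    then have "card K \<le> card (\<Union>(S ` K) - {x})" by (auto simp: card_Diff_singleton_if)
    moreover have "(\<Union>i\<in>K. S i - {x}) = \<Union>(S ` K) - {x}" by auto
    ultimately show ?thesis by simp
  qed simp
qed

lemma representatives_disjoint_Un:
  assumes "inj_on f J" "\<forall>i\<in>J. f i \<in> S i" "inj_on g K" "\<forall>i\<in>K. g i \<in> S i"
    and "f ` J \<inter> g ` K = {}" "J \<union> K = I"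
  shows "\<exists>h. inj_on h I \<and> (\<forall>i\<in>I. h i \<in> S i)"
  using inj_on_disjoint_Un[OF assms(1,3,5)] assms(2,4,6)
  by (intro exI[of _ "\<lambda>i. if i \<in> J then f i else g i"]) auto

text \<open>Halmos and Vaughan's induction: split at a critical subfamily if there is one;
  otherwise any choice for a single index preserves Hall's condition for the others.\<close>
theorem hall_marriage:
  assumes "finite I" "\<forall>i\<in>I. finite (S i)" "hall_condition I S"
  shows "\<exists>f. inj_on f I \<and> (\<forall>i\<in>I. f i \<in> S i)"
  using assms
proof (induction "card I" arbitrary: I S rule: less_induct)
  case less
  note fin = less.prems(1,2) and hall = less.prems(3)
  consider "I = {}" | (critical) J where "J \<subseteq> I" "J \<noteq> {}" "J \<noteq> I" "card (\<Union>(S ` J)) = card J"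
    | (surplus) i0 where "i0 \<in> I" "\<forall>K\<subseteq>I. K \<noteq> {} \<longrightarrow> K \<noteq> I \<longrightarrow> card (\<Union>(S ` K)) \<noteq> card K"
    by (metis all_not_in_conv)
  then show ?case
  proof cases
    case 1
    then show ?thesis by simp
  next
    case critical
    let ?T = "\<Union>(S ` J)"
    have "finite J" using critical(1) fin(1) by (rule finite_subset)
    have "J \<subset> I" "I - J \<subset> I" using critical(1-3) by blast+
    then have "card J < card I" "card (I - J) < card I" by (simp_all add: psubset_card_mono fin(1))
    have "\<forall>i\<in>J. finite (S i)" "hall_condition J S"
      using critical(1) fin(2) hall unfolding hall_condition_def by auto
    from less.hyps[OF \<open>card J < card I\<close> \<open>finite J\<close> this]
    obtain f1 where f1: "inj_on f1 J" "\<forall>i\<in>J. f1 i \<in> S i" by blast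
    have "finite (I - J)" "\<forall>i\<in>I - J. finite (S i - ?T)" using fin by auto
    from less.hyps[OF \<open>card (I - J) < card I\<close> this hall_condition_Diff_critical[OF fin hall critical(1,4)]]
    obtain f2 where f2: "inj_on f2 (I - J)" "\<forall>i\<in>I - J. f2 i \<in> S i - ?T" by blast
    have f2S: "\<forall>i\<in>I - J. f2 i \<in> S i" using f2(2) by simp
    have "f1 ` J \<subseteq> ?T" "f2 ` (I - J) \<inter> ?T = {}" using f1(2) f2(2) by auto
    then have "f1 ` J \<inter> f2 ` (I - J) = {}" by blast
    moreover have "J \<union> (I - J) = I" using critical(1) by blast
    ultimately show ?thesis by (rule representatives_disjoint_Un[OF f1 f2(1) f2S])
  next
    case surplus
    have "card {i0} \<le> card (\<Union>(S ` {i0}))" using hall surplus(1) unfolding hall_condition_def by blast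
    then have "S i0 \<noteq> {}" by auto
    then obtain x where "x \<in> S i0" by blast
    have "card (I - {i0}) < card I" using fin(1) surplus(1) by (rule card_Diff1_less)
    moreover have "finite (I - {i0})" "\<forall>i\<in>I - {i0}. finite (S i - {x})" using fin by auto
    moreover have "hall_condition (I - {i0}) (\<lambda>i. S i - {x})"
      by (rule hall_condition_Diff_point[OF fin hall surplus])
    ultimately obtain f2 where f2: "inj_on f2 (I - {i0})" "\<forall>i\<in>I - {i0}. f2 i \<in> S i - {x}"
      by (metis less.hyps)
    have "inj_on (\<lambda>_. x) {i0}" "\<forall>i\<in>{i0}. x \<in> S i" using \<open>x \<in> S i0\<close> by simp_all
    moreover have "\<forall>i\<in>I - {i0}. f2 i \<in> S i" "(\<lambda>_. x) ` {i0} \<inter> f2 ` (I - {i0}) = {}"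
      using f2(2) by auto
    moreover have "{i0} \<union> (I - {i0}) = I" using surplus(1) by blast
    ultimately show ?thesis by (rule representatives_disjoint_Un[OF _ _ f2(1)])
  qed
qed

lemma regular_01_matrix_perfect_matching:
  assumes M: "regular_01_matrix n r M" and "0 < r"
  shows "\<exists>f. bij_betw f {..<n} {..<n} \<and> (\<forall>i<n. M i (f i) = 1)"
proof -
  define S where "S i = {j. j < n \<and> M i j = 1}" for i
  have M01: "\<forall>i<n. \<forall>j<n. M i j \<in> {0, 1}" and row: "\<forall>i<n. (\<Sum>j<n. M i j) = int r"
    and col: "\<forall>j<n. (\<Sum>i<n. M i j) = int r"
    using M unfolding regular_01_matrix_def by auto
  have nonneg: "0 \<le> M i j" if "i < n" "j < n" for i j using M01 that by fastforce
  have "card J \<le> card (\<Union>(S ` J))" if J: "J \<subseteq> {..<n}" for J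
  proof -
    let ?T = "\<Union>(S ` J)"
    have T: "?T \<subseteq> {..<n}" by (auto simp: S_def)
    have "int r * int (card J) = (\<Sum>i\<in>J. \<Sum>j<n. M i j)"
      using row J by (simp add: subset_eq)
    also have "\<dots> = (\<Sum>i\<in>J. \<Sum>j\<in>?T. M i j)"
    proof (rule sum.cong[OF refl], rule sum.mono_neutral_right)
      show "\<And>i. i \<in> J \<Longrightarrow> \<forall>j\<in>{..<n} - ?T. M i j = 0"
        using M01 J by (fastforce simp: S_def)
    qed (use T in auto)
    also have "\<dots> = (\<Sum>j\<in>?T. \<Sum>i\<in>J. M i j)" by (rule sum.swap)
    also have "\<dots> \<le> (\<Sum>j\<in>?T. \<Sum>i<n. M i j)"
      using J T nonneg by (intro sum_mono sum_mono2) auto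
    also have "\<dots> = (\<Sum>j\<in>?T. int r)"
      using col T by (intro sum.cong) auto
    also have "\<dots> = int r * int (card ?T)" by simp
    finally show ?thesis using \<open>0 < r\<close> by simp
  qed
  then obtain f where f: "inj_on f {..<n}" "\<forall>i<n. f i \<in> S i"
    using hall_marriage[of "{..<n}" S] unfolding hall_condition_def S_def by auto
  then have "f ` {..<n} = {..<n}"
    by (intro card_subset_eq) (auto simp: S_def card_image)
  then show ?thesis using f unfolding bij_betw_def S_def by auto
qed

lemma regular_01_matrix_diff_perm:
  assumes M: "regular_01_matrix n (Suc r) M" and P: "is_perm_matrix n P"
    and below: "\<forall>i<n. \<forall>j<n. P i j = 1 \<longrightarrow> M i j = 1"
  shows "regular_01_matrix n r (\<lambda>i j. M i j - P i j)"
proof -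
  have P1: "regular_01_matrix n 1 P" using P by (simp add: is_perm_matrix_iff_regular)
  have "M i j - P i j \<in> {0, 1}" if "i < n" "j < n" for i j
  proof -
    have "M i j \<in> {0, 1}" "P i j \<in> {0, 1}" "P i j = 1 \<longrightarrow> M i j = 1"
      using M P1 below that unfolding regular_01_matrix_def by auto
    then show ?thesis by auto
  qed
  then show ?thesis
    using M P1 unfolding regular_01_matrix_def by (simp add: sum_subtractf)
qed

theorem regular_01_matrix_perm_decomposition:
  "regular_01_matrix n r M \<Longrightarrow>
     \<exists>Q. (\<forall>s<r. is_perm_matrix n (Q s)) \<and> (\<forall>i<n. \<forall>j<n. M i j = (\<Sum>s<r. Q s i j))"
proof (induction r arbitrary: M)
  case 0
  have "M i j = 0" if "i < n" "j < n" for i j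
  proof -
    have "\<forall>j\<in>{..<n}. 0 \<le> M i j" "(\<Sum>j<n. M i j) = 0"
      using 0 \<open>i < n\<close> unfolding regular_01_matrix_def by fastforce+
    then show ?thesis using \<open>j < n\<close> sum_nonneg_eq_0_iff[of "{..<n}" "M i"] by simp
  qed
  then show ?case by auto
next
  case (Suc r)
  obtain f where f: "bij_betw f {..<n} {..<n}" "\<forall>i<n. M i (f i) = 1"
    using regular_01_matrix_perfect_matching[OF Suc.prems] by auto
  define P where "P i j = (of_bool (j = f i) :: int)" for i j
  have P: "is_perm_matrix n P" unfolding P_def by (rule is_perm_matrix_bij[OF f(1)])
  have "\<forall>i<n. \<forall>j<n. P i j = 1 \<longrightarrow> M i j = 1" using f(2) by (simp add: P_def)
  from Suc.IH[OF regular_01_matrix_diff_perm[OF Suc.prems P this]]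
  obtain Q where Q: "\<forall>s<r. is_perm_matrix n (Q s)" "\<forall>i<n. \<forall>j<n. M i j - P i j = (\<Sum>s<r. Q s i j)"
    by blast
  then show ?case
    using P by (intro exI[of _ "Q(r := P)"]) (auto simp: less_Suc_eq diff_eq_eq)
qed

section \<open>Circulant matrices\<close>

definition circulant :: "nat \<Rightarrow> int set \<Rightarrow> nat \<Rightarrow> nat \<Rightarrow> int" where
  "circulant n R i j = of_bool ((int i - int j) mod int n \<in> R)"

lemma eq_of_mod_eq_int:
  fixes a b m :: int
  assumes "a mod m = b mod m" "\<bar>a - b\<bar> < m"
  shows "a = b"
proof (rule ccontr)
  assume "a \<noteq> b"
  moreover have "m dvd a - b" using assms(1) by (simp add: mod_eq_dvd_iff)
  ultimately have "\<bar>m\<bar> \<le> \<bar>a - b\<bar>" using dvd_imp_le_int[of "a - b" m] by simp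
  then show False using assms(2) by simp
qed

lemma bij_betw_by_card:
  assumes "inj_on f A" "f ` A \<subseteq> B" "card A = card B" "finite B"
  shows "bij_betw f A B"
  using assms by (simp add: bij_betw_def card_image card_subset_eq)

lemma bij_betw_diff_mod:
  assumes "0 < n"
  shows "bij_betw (\<lambda>j. (int i - int j) mod int n) {..<n} {0..<int n}"
    and "bij_betw (\<lambda>i. (int i - int j) mod int n) {..<n} {0..<int n}"
proof -
  have "inj_on (\<lambda>j. (int i - int j) mod int n) {..<n}"
  proof (rule inj_onI)
    fix j j' assume "j \<in> {..<n}" "j' \<in> {..<n}" "(int i - int j) mod int n = (int i - int j') mod int n"
    then have "int i - int j = int i - int j'"
      using eq_of_mod_eq_int[where m = "int n" and a = "int i - int j" and b = "int i - int j'"] by auto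
    then show "j = j'" by simp
  qed
  then show "bij_betw (\<lambda>j. (int i - int j) mod int n) {..<n} {0..<int n}"
    using assms by (intro bij_betw_by_card) auto
  have "inj_on (\<lambda>i. (int i - int j) mod int n) {..<n}"
  proof (rule inj_onI)
    fix i i' assume "i \<in> {..<n}" "i' \<in> {..<n}" "(int i - int j) mod int n = (int i' - int j) mod int n"
    then have "int i - int j = int i' - int j"
      using eq_of_mod_eq_int[where m = "int n" and a = "int i - int j" and b = "int i' - int j"] by auto
    then show "i = i'" by simp
  qed
  then show "bij_betw (\<lambda>i. (int i - int j) mod int n) {..<n} {0..<int n}"
    using assms by (intro bij_betw_by_card) auto
qed

lemma card_preimage_bij_betw:
  assumes "bij_betw f A B" "R \<subseteq> B"
  shows "card {x\<in>A. f x \<in> R} = card R"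
proof -
  have "f ` {x\<in>A. f x \<in> R} = R"
    using assms by (auto simp: bij_betw_def)
  then have "bij_betw f {x\<in>A. f x \<in> R} R"
    by (intro bij_betw_subset[OF assms(1)]) auto
  then show ?thesis by (rule bij_betw_same_card)
qed

lemma regular_01_matrix_circulant:
  assumes "0 < n" "R \<subseteq> {0..<int n}"
  shows "regular_01_matrix n (card R) (circulant n R)"
  unfolding regular_01_matrix_def circulant_def
  using card_preimage_bij_betw[OF bij_betw_diff_mod(1)[OF assms(1)] assms(2)]
    card_preimage_bij_betw[OF bij_betw_diff_mod(2)[OF assms(1)] assms(2)]
  by (simp add: Collect_conj_eq Int_commute lessThan_def)

lemma obtain_subset_between:
  assumes "finite U" "X \<subseteq> U" "Y \<subseteq> U" "X \<inter> Y = {}" "card X \<le> a" "a + card Y \<le> card U"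
  obtains R where "X \<subseteq> R" "R \<subseteq> U - Y" "card R = a"
proof -
  have fin: "finite X" "finite Y" using assms(1-3) by (auto intro: finite_subset)
  have "card (U - (X \<union> Y)) = card U - (card X + card Y)"
    using assms(2-4) fin by (simp add: card_Diff_subset card_Un_disjoint)
  then have "a - card X \<le> card (U - (X \<union> Y))" using assms(5,6) by linarith
  then obtain E where E: "E \<subseteq> U - (X \<union> Y)" "card E = a - card X"
    by (rule obtain_subset_with_card_n)
  have "finite E" "X \<inter> E = {}" using E(1) assms(1) by (auto intro: finite_subset)
  then have "card (X \<union> E) = a" using fin E(2) assms(5) by (simp add: card_Un_disjoint)
  moreover have "X \<union> E \<subseteq> U - Y" using assms(2,4) E(1) by blast
  ultimately show ?thesis using that by blast
qed

definition compatible :: "nat \<Rightarrow> (nat \<Rightarrow> nat \<Rightarrow> int) \<Rightarrow> (nat \<Rightarrow> nat \<Rightarrow> int) \<Rightarrow> bool" where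
  "compatible n A L \<longleftrightarrow> (\<forall>i<n. \<forall>j<n. (A i j = -1 \<longrightarrow> L i j = 1) \<and> (A i j = 1 \<longrightarrow> L i j = 0))"

lemma compatible_circulant_exists:
  assumes "0 < n" "X \<inter> Y = {}" "X \<subseteq> {0..<int n}" "Y \<subseteq> {0..<int n}" "card X \<le> a" "a + card Y \<le> n"
    and neg: "\<forall>i<n. \<forall>j<n. A i j = -1 \<longrightarrow> (int i - int j) mod int n \<in> X"
    and pos: "\<forall>i<n. \<forall>j<n. A i j = 1 \<longrightarrow> (int i - int j) mod int n \<in> Y"
  shows "\<exists>M. regular_01_matrix n a M \<and> compatible n A M"
proof -
  obtain R where R: "X \<subseteq> R" "R \<subseteq> {0..<int n} - Y" "card R = a"
    using obtain_subset_between[of "{0..<int n}" X Y a] assms(2-6) by auto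
  have "regular_01_matrix n a (circulant n R)"
    using regular_01_matrix_circulant[OF assms(1), of R] R by auto
  moreover have "compatible n A (circulant n R)"
    using neg pos R unfolding compatible_def circulant_def by auto
  ultimately show ?thesis by blast
qed

section \<open>Stacking permutation matrices around an ASM\<close>

lemma sum_list_map_upt: "sum_list (map f [m..<n]) = (\<Sum>i = m..<n. f i)"
  by (simp add: interv_sum_list_conv_sum_set_nat)

lemma is_ASM_line_sums:
  assumes "is_ASM n A" "i < n"
  shows "(\<Sum>j<n. A i j) = 1" "(\<Sum>j<n. A j i) = 1"
proof -
  have "alt_sign_seq (map (\<lambda>j. A i j) [0..<n])" "alt_sign_seq (map (\<lambda>j. A j i) [0..<n])"
    using assms unfolding is_ASM_def by auto
  from this[THEN alt_sign_seq_sum_list] show "(\<Sum>j<n. A i j) = 1" "(\<Sum>j<n. A j i) = 1"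
    by (simp_all add: sum_list_map_upt atLeast0LessThan)
qed

lemma alt_sign_seq_perm_matrix_lines:
  assumes "is_perm_matrix n P" "i < n"
  shows "alt_sign_seq (map (\<lambda>j. P i j) [0..<n])" "alt_sign_seq (map (\<lambda>j. P j i) [0..<n])"
proof -
  have "\<forall>j<n. P i j \<in> {0, 1}" "\<forall>j<n. P j i \<in> {0, 1}" "(\<Sum>j<n. P i j) = 1" "(\<Sum>j<n. P j i) = 1"
    using assms unfolding is_perm_matrix_iff_regular regular_01_matrix_def by auto
  then show "alt_sign_seq (map (\<lambda>j. P i j) [0..<n])" "alt_sign_seq (map (\<lambda>j. P j i) [0..<n])"
    by (auto intro!: alt_sign_seq_01 simp: sum_list_map_upt atLeast0LessThan)
qed

lemma regular_01_matrix_complement: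
  assumes A: "is_ASM n A" and L: "regular_01_matrix n r L" "compatible n A L" and "r < n"
  shows "regular_01_matrix n (n - 1 - r) (\<lambda>i j. 1 - A i j - L i j)"
    and "compatible n A (\<lambda>i j. 1 - A i j - L i j)"
proof -
  have "1 - A i j - L i j \<in> {0, 1}" if "i < n" "j < n" for i j
  proof -
    have "A i j \<in> {-1, 0, 1}" "L i j \<in> {0, 1}"
      "A i j = -1 \<longrightarrow> L i j = 1" "A i j = 1 \<longrightarrow> L i j = 0"
      using A L that unfolding is_ASM_def regular_01_matrix_def compatible_def by auto
    then show ?thesis by auto
  qed
  then show "regular_01_matrix n (n - 1 - r) (\<lambda>i j. 1 - A i j - L i j)"
    using L(1) is_ASM_line_sums[OF A] \<open>r < n\<close>
    unfolding regular_01_matrix_def by (simp add: sum_subtractf)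
  show "compatible n A (\<lambda>i j. 1 - A i j - L i j)"
    using L(2) unfolding compatible_def by auto
qed

lemma is_ASHM_stack:
  assumes A: "is_ASM n A" and "m < n"
    and P: "\<forall>s<n. s \<noteq> m \<longrightarrow> is_perm_matrix n (P s)"
    and lines: "\<forall>i<n. \<forall>j<n. (\<Sum>s<m. P s i j) \<le> 1 \<and> (\<Sum>s = Suc m..<n. P s i j) \<le> 1 \<and>
                   A i j + (\<Sum>s<m. P s i j) + (\<Sum>s = Suc m..<n. P s i j) = 1"
  shows "is_ASHM n (\<lambda>s. if s = m then A else P s)"
  unfolding is_ASHM_def
proof (intro conjI allI impI)
  fix s i j assume "s < n" "i < n" "j < n"
  then show "(if s = m then A else P s) i j \<in> {-1, 0, 1}"
    using A P unfolding is_ASM_def is_perm_matrix_def by auto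
next
  fix s i assume "s < n" "i < n"
  then show "alt_sign_seq (map (\<lambda>j. (if s = m then A else P s) i j) [0..<n])"
    and "alt_sign_seq (map (\<lambda>j. (if s = m then A else P s) j i) [0..<n])"
    using A P alt_sign_seq_perm_matrix_lines unfolding is_ASM_def by auto
next
  fix i j assume ij: "i < n" "j < n"
  have "[0..<n] = [0..<m] @ m # [Suc m..<n]"
    using \<open>m < n\<close> upt_split[of 0 m n] by (simp add: upt_conv_Cons)
  then have split: "map (\<lambda>s. (if s = m then A else P s) i j) [0..<n]
      = map (\<lambda>s. P s i j) [0..<m] @ A i j # map (\<lambda>s. P s i j) [Suc m..<n]"
    by simp
  have "\<forall>s<n. s \<noteq> m \<longrightarrow> P s i j \<in> {0, 1}"
    using P ij unfolding is_perm_matrix_def by auto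
  then have "set (map (\<lambda>s. P s i j) [0..<m]) \<subseteq> {0, 1}" "set (map (\<lambda>s. P s i j) [Suc m..<n]) \<subseteq> {0, 1}"
    using \<open>m < n\<close> by (auto simp: subset_eq)
  then show "alt_sign_seq (map (\<lambda>s. (if s = m then A else P s) i j) [0..<n])"
    unfolding split
    by (rule alt_sign_seq_stack) (use lines ij in \<open>simp_all add: sum_list_map_upt atLeast0LessThan\<close>)
qed

lemma exists_ASHM_extension:
  assumes k: "1 \<le> k" "k \<le> n" and A: "is_ASM n A"
    and L: "regular_01_matrix n (k - 1) L" "compatible n A L"
  shows "\<exists>P. (\<forall>s<n. s \<noteq> k - 1 \<longrightarrow> is_perm_matrix n (P s)) \<and>
             is_ASHM n (\<lambda>s. if s = k - 1 then A else P s)"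
proof -
  define U where "U i j = 1 - A i j - L i j" for i j
  have "k - 1 < n" "n - 1 - (k - 1) = n - k" using k by auto
  then have U: "regular_01_matrix n (n - k) U"
    using regular_01_matrix_complement(1)[OF A L] unfolding U_def by metis
  obtain QL where QL: "\<forall>s<k - 1. is_perm_matrix n (QL s)" "\<forall>i<n. \<forall>j<n. L i j = (\<Sum>s<k - 1. QL s i j)"
    using regular_01_matrix_perm_decomposition[OF L(1)] by blast
  obtain QU where QU: "\<forall>s<n - k. is_perm_matrix n (QU s)" "\<forall>i<n. \<forall>j<n. U i j = (\<Sum>s<n - k. QU s i j)"
    using regular_01_matrix_perm_decomposition[OF U] by blast
  define P where "P s = (if s < k - 1 then QL s else QU (s - k))" for s
  have "\<forall>s<n. s \<noteq> k - 1 \<longrightarrow> is_perm_matrix n (P s)"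
    using QL(1) QU(1) k by (auto simp: P_def)
  moreover have "(\<Sum>s<k - 1. P s i j) = L i j" if "i < n" "j < n" for i j
    using QL(2) that by (simp add: P_def)
  moreover have "(\<Sum>s = k..<n. P s i j) = U i j" if "i < n" "j < n" for i j
  proof -
    have "(\<Sum>s = k..<n. P s i j) = (\<Sum>s = 0 + k..<(n - k) + k. QU (s - k) i j)"
      using k by (intro sum.cong) (auto simp: P_def)
    also have "\<dots> = U i j"
      using QU(2) that by (simp only: sum.shift_bounds_nat_ivl) (simp add: atLeast0LessThan)
    finally show ?thesis .
  qed
  moreover have "L i j \<le> 1" "U i j \<le> 1" if "i < n" "j < n" for i j
    using L(1) U that unfolding regular_01_matrix_def by fastforce+
  ultimately show ?thesis
    using k by (intro exI[of _ P] conjI is_ASHM_stack[OF A]) (auto simp: U_def)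
qed

section \<open>A banded ASM with a prescribed number of entries -1\<close>

text \<open>
  For d = 0 this is F_n^(w+1) with 0-based indices. For d > 0 the entries +1 at (i, i + w),
  i \<le> d, and -1 at (i, i + w - 1), 1 \<le> i \<le> d, are deleted and a +1 is put at (0, w + d);
  this removes exactly d entries -1.
\<close>
definition band_matrix :: "nat \<Rightarrow> nat \<Rightarrow> nat \<Rightarrow> nat \<Rightarrow> nat \<Rightarrow> int" where
  "band_matrix n w d i j =
     (if i = 0 \<and> j = w + d then 1
      else if w \<le> i + j \<and> i + j + w + 2 \<le> 2 * n \<and> j \<le> i + w \<and> i \<le> j + w
              \<and> \<not> (i + w \<le> j + 1 \<and> i + j \<le> 2 * d + w)
      then (if even (i + j + w) then 1 else -1) else 0)"

lemma band_matrix_row: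
  assumes "2 * w + d < n" "0 < d \<longrightarrow> 0 < w" "0 < i" "i < n"
  defines "lo \<equiv> if i \<le> w then w - i else i - w"
    and "hi \<equiv> if i \<le> d then i + w - 2 else min (2 * n - 2 - w - i) (i + w)"
  shows "band_matrix n w d i = alt_block lo hi" and "lo \<le> hi" "hi < n" "even (hi + lo)"
proof -
  show "lo \<le> hi" "hi < n" "even (hi + lo)"
    using assms(1-4) unfolding lo_def hi_def by (auto simp: min_def)
  have "(w \<le> i + j \<and> i + j + w + 2 \<le> 2 * n \<and> j \<le> i + w \<and> i \<le> j + w
          \<and> \<not> (i + w \<le> j + 1 \<and> i + j \<le> 2 * d + w)) \<longleftrightarrow> lo \<le> j \<and> j \<le> hi" for j
    using assms(1-4) unfolding lo_def hi_def by (auto split: if_split_asm)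
  moreover have "even (i + j + w) \<longleftrightarrow> even (j + lo)" for j
    unfolding lo_def by (cases "even i"; cases "even j"; cases "even w"; simp)
  ultimately show "band_matrix n w d i = alt_block lo hi"
    using \<open>0 < i\<close> unfolding band_matrix_def alt_block_def by auto
qed

lemma band_matrix_row_0: "band_matrix n w d 0 = alt_block (w + d) (w + d)"
  unfolding band_matrix_def alt_block_def by (intro ext) auto

lemma band_matrix_col:
  assumes "2 * w + d < n" "0 < d \<longrightarrow> 0 < w" "j < n" "\<not> (j = w + d \<and> 0 < d)"
  defines "lo \<equiv> if w \<le> j \<and> j < w + d then j - w + 2 else if j \<le> w then w - j else j - w"
    and "hi \<equiv> min (2 * n - 2 - w - j) (j + w)"
  shows "(\<lambda>i. band_matrix n w d i j) = alt_block lo hi" and "lo \<le> hi" "hi < n" "even (hi + lo)"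
proof -
  show "lo \<le> hi" "hi < n" "even (hi + lo)"
    using assms(1-4) unfolding lo_def hi_def by (auto simp: min_def)
  have "(w \<le> i + j \<and> i + j + w + 2 \<le> 2 * n \<and> j \<le> i + w \<and> i \<le> j + w
          \<and> \<not> (i + w \<le> j + 1 \<and> i + j \<le> 2 * d + w)) \<longleftrightarrow> lo \<le> i \<and> i \<le> hi"
    if "\<not> (i = 0 \<and> j = w + d)" for i
    using assms(1-4) that unfolding lo_def hi_def by (auto split: if_split_asm)
  moreover have "even (i + j + w) \<longleftrightarrow> even (i + lo)" for i
    unfolding lo_def by (cases "even i"; cases "even j"; cases "even w"; simp)
  moreover have "j = w + d \<Longrightarrow> lo = 0"
    using assms(4) unfolding lo_def by auto
  ultimately show "(\<lambda>i. band_matrix n w d i j) = alt_block lo hi"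
    unfolding band_matrix_def alt_block_def by fastforce
qed

lemma band_matrix_col_lead:
  assumes "2 * w + d < n" "0 < d" "0 < w"
  defines "hi \<equiv> min (2 * n - 2 - 2 * w - d) (2 * w + d)"
  shows "(\<lambda>i. band_matrix n w d i (w + d)) = (\<lambda>i. if i = 0 then 1 else - alt_block (Suc d) hi i)"
    and "Suc d \<le> hi" "hi < n" "odd (hi + Suc d)"
proof -
  show "Suc d \<le> hi" "hi < n" "odd (hi + Suc d)"
    using assms(1-3) unfolding hi_def by (auto simp: min_def)
  have "(w \<le> i + (w + d) \<and> i + (w + d) + w + 2 \<le> 2 * n \<and> w + d \<le> i + w \<and> i \<le> w + d + w
          \<and> \<not> (i + w \<le> w + d + 1 \<and> i + (w + d) \<le> 2 * d + w)) \<longleftrightarrow> Suc d \<le> i \<and> i \<le> hi" for i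
    using assms(1,2) unfolding hi_def by auto
  moreover have "even (i + (w + d) + w) \<longleftrightarrow> \<not> even (i + Suc d)" for i
    by (cases "even i"; cases "even w"; cases "even d"; simp)
  ultimately show "(\<lambda>i. band_matrix n w d i (w + d)) = (\<lambda>i. if i = 0 then 1 else - alt_block (Suc d) hi i)"
    unfolding band_matrix_def alt_block_def by fastforce
qed

lemma band_matrix_is_ASM:
  assumes "2 * w + d < n" "0 < d \<longrightarrow> 0 < w"
  shows "is_ASM n (band_matrix n w d)"
  unfolding is_ASM_def
proof (intro conjI allI impI)
  fix i j assume "i < n" "j < n"
  show "band_matrix n w d i j \<in> {-1, 0, 1}" unfolding band_matrix_def by auto
next
  fix i assume "i < n"
  show "alt_sign_seq (map (band_matrix n w d i) [0..<n])"
  proof (cases "i = 0")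
    case True
    then show ?thesis
      using assms by (simp add: band_matrix_row_0 alt_sign_seq_alt_block)
  next
    case False
    then show ?thesis
      using band_matrix_row[OF assms _ \<open>i < n\<close>] by (simp add: alt_sign_seq_alt_block)
  qed
next
  fix j assume "j < n"
  show "alt_sign_seq (map (\<lambda>i. band_matrix n w d i j) [0..<n])"
  proof (cases "j = w + d \<and> 0 < d")
    case True
    then show ?thesis
      using band_matrix_col_lead[OF assms(1)] assms(2) by (simp add: alt_sign_seq_one_then_neg_alt_block)
  next
    case False
    then show ?thesis
      using band_matrix_col[OF assms \<open>j < n\<close>] by (simp add: alt_sign_seq_alt_block)
  qed
qed

lemma band_matrix_eq_neg_one_iff:
  assumes "2 * w + d < n"
  shows "band_matrix n w d i j = -1 \<longleftrightarrow>
    (\<exists>x y. x < n - 1 - w \<and> y < w \<and> \<not> (y = 0 \<and> x < d) \<and> i = 1 + x + y \<and> j + y = w + x)"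
proof
  assume "band_matrix n w d i j = -1"
  then have c: "w \<le> i + j" "i + j + w + 2 \<le> 2 * n" "j \<le> i + w" "i \<le> j + w"
     "\<not> (i + w \<le> j + 1 \<and> i + j \<le> 2 * d + w)" "odd (i + j + w)"
    unfolding band_matrix_def by (auto split: if_split_asm)
  have "odd (i + j - w)" "odd (i + w - j)" using c(1,3,6) by presburger+
  then obtain x y where x: "i + j - w = 2 * x + 1" and y: "i + w - j = 2 * y + 1" by (metis oddE)
  from x c(1) have "i + j = 2 * x + 1 + w" by linarith
  moreover from y c(3) have "i + w = 2 * y + 1 + j" by linarith
  ultimately have "x < n - 1 - w \<and> y < w \<and> \<not> (y = 0 \<and> x < d) \<and> i = 1 + x + y \<and> j + y = w + x"
    using c(2,4,5) by auto
  then show "\<exists>x y. x < n - 1 - w \<and> y < w \<and> \<not> (y = 0 \<and> x < d) \<and> i = 1 + x + y \<and> j + y = w + x"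
    by blast
next
  assume "\<exists>x y. x < n - 1 - w \<and> y < w \<and> \<not> (y = 0 \<and> x < d) \<and> i = 1 + x + y \<and> j + y = w + x"
  then obtain x y where "x < n - 1 - w" "y < w" "\<not> (y = 0 \<and> x < d)" "i = 1 + x + y" "j + y = w + x"
    by blast
  moreover have "odd (i + j + w)" if "i = 1 + x + y" "j + y = w + x"
    using that by presburger
  ultimately show "band_matrix n w d i j = -1"
    using assms unfolding band_matrix_def by auto
qed

lemma num_neg_ones_band_matrix:
  assumes "2 * w + d < n" "0 < d \<longrightarrow> 0 < w"
  shows "num_neg_ones n (band_matrix n w d) = w * (n - 1 - w) - d"
proof -
  define S where "S = ({..<n - 1 - w} \<times> {..<w}) - ({..<d} \<times> {0})"
  define f where "f = (\<lambda>(x, y). (1 + x + y, w + x - y))"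
  have "{(i, j). i < n \<and> j < n \<and> band_matrix n w d i j = -1} = f ` S"
  proof (intro equalityI subsetI)
    fix p assume "p \<in> {(i, j). i < n \<and> j < n \<and> band_matrix n w d i j = -1}"
    then obtain i j x y where "p = (i, j)" "x < n - 1 - w" "y < w" "\<not> (y = 0 \<and> x < d)"
      "i = 1 + x + y" "j + y = w + x"
      using band_matrix_eq_neg_one_iff[OF assms(1)] by blast
    then show "p \<in> f ` S"
      unfolding S_def f_def by (auto intro!: image_eqI[of _ _ "(x, y)"])
  next
    fix p assume "p \<in> f ` S"
    then obtain x y where "(x, y) \<in> S" "p = f (x, y)" by auto
    then show "p \<in> {(i, j). i < n \<and> j < n \<and> band_matrix n w d i j = -1}"
      using band_matrix_eq_neg_one_iff[OF assms(1)] assms(1) unfolding S_def f_def by auto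
  qed
  moreover have "inj_on f S" unfolding f_def S_def by (rule inj_onI) auto
  moreover have "{..<d} \<times> {0} \<subseteq> {..<n - 1 - w} \<times> {..<w}"
    using assms by (cases "d = 0") auto
  then have "card S = (n - 1 - w) * w - d"
    unfolding S_def by (simp add: card_Diff_subset card_cartesian_product)
  ultimately show ?thesis
    unfolding num_neg_ones_def by (simp add: card_image mult.commute)
qed

definition band_neg_diagonals :: "nat \<Rightarrow> nat \<Rightarrow> int set" where
  "band_neg_diagonals n w = (\<lambda>y. (1 + 2 * int y - int w) mod int n) ` {..<w}"

definition band_pos_diagonals :: "nat \<Rightarrow> nat \<Rightarrow> nat \<Rightarrow> int set" where
  "band_pos_diagonals n w d =
     insert ((- int (w + d)) mod int n) ((\<lambda>y. (2 * int y - int w) mod int n) ` {..w})"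

lemma band_matrix_neg_diagonal:
  assumes "2 * w + d < n" "band_matrix n w d i j = -1"
  shows "(int i - int j) mod int n \<in> band_neg_diagonals n w"
proof -
  obtain x y where "y < w" "i = 1 + x + y" "j + y = w + x"
    using assms band_matrix_eq_neg_one_iff[OF assms(1)] by blast
  moreover from this have "int i - int j = 1 + 2 * int y - int w" by arith
  ultimately show ?thesis
    unfolding band_neg_diagonals_def by (intro image_eqI[where x = y]) auto
qed

lemma band_matrix_pos_diagonal:
  assumes "band_matrix n w d i j = 1"
  shows "(int i - int j) mod int n \<in> band_pos_diagonals n w d"
proof (cases "i = 0 \<and> j = w + d")
  case False
  then have "j \<le> i + w" "i \<le> j + w" "even (i + j + w)"
    using assms unfolding band_matrix_def by (auto split: if_split_asm)
  moreover from this have "even (i + w - j)" by presburger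
  then obtain y where "i + w - j = 2 * y" by (rule evenE)
  ultimately have "y \<le> w" "int i - int j = 2 * int y - int w" by arith+
  then show ?thesis
    unfolding band_pos_diagonals_def by (intro insertI2 image_eqI[where x = y]) auto
qed (simp add: band_pos_diagonals_def)

lemma band_diagonals_disjoint:
  assumes "2 * w + d < n"
  shows "band_neg_diagonals n w \<inter> band_pos_diagonals n w d = {}"
proof (rule ccontr)
  assume "band_neg_diagonals n w \<inter> band_pos_diagonals n w d \<noteq> {}"
  then obtain y where y: "y < w" "(1 + 2 * int y - int w) mod int n \<in> band_pos_diagonals n w d"
    unfolding band_neg_diagonals_def by auto
  then consider "(1 + 2 * int y - int w) mod int n = (- int (w + d)) mod int n"
    | y' where "y' \<le> w" "(1 + 2 * int y - int w) mod int n = (2 * int y' - int w) mod int n"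
    unfolding band_pos_diagonals_def by auto
  then show False
  proof cases
    case 1
    then have "1 + 2 * int y - int w = - int (w + d)"
      using y(1) assms by (intro eq_of_mod_eq_int[OF 1]) simp
    then show False by simp
  next
    case 2
    then have "1 + 2 * int y - int w = 2 * int y' - int w"
      using y(1) assms by (intro eq_of_mod_eq_int[OF 2(2)]) simp
    then show False by presburger
  qed
qed

lemma card_band_diagonals:
  assumes "2 * w + d < n" "0 < d \<longrightarrow> 0 < w" "w \<le> a" "2 * a < n"
  shows "card (band_neg_diagonals n w) \<le> a" "a + card (band_pos_diagonals n w d) \<le> n"
proof -
  define Y0 where "Y0 = (\<lambda>y. (2 * int y - int w) mod int n) ` {..w}"
  have "card (band_neg_diagonals n w) \<le> card {..<w}"
    unfolding band_neg_diagonals_def by (rule card_image_le) simp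
  then show "card (band_neg_diagonals n w) \<le> a" using assms(3) by simp
  have "card Y0 \<le> card {..w}" unfolding Y0_def by (rule card_image_le) simp
  moreover have "card (band_pos_diagonals n w d) \<le> Suc (card Y0)"
    unfolding band_pos_diagonals_def Y0_def by (rule card_insert_le_m1) auto
  moreover have "band_pos_diagonals n w d = Y0" if "d = 0"
  proof -
    have "(- int (w + d)) mod int n \<in> Y0"
      using that unfolding Y0_def by (intro image_eqI[where x = 0]) simp_all
    then show ?thesis by (simp add: band_pos_diagonals_def Y0_def insert_absorb)
  qed
  ultimately show "a + card (band_pos_diagonals n w d) \<le> n"
    using assms by (cases "d = 0") auto
qed

lemma band_matrix_compatible_regular:
  assumes "2 * w + d < n" "0 < d \<longrightarrow> 0 < w" "w \<le> a" "2 * a < n"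
  shows "\<exists>M. regular_01_matrix n a M \<and> compatible n (band_matrix n w d) M"
proof (rule compatible_circulant_exists)
  show "0 < n" using assms(1) by simp
  then show "band_neg_diagonals n w \<subseteq> {0..<int n}" "band_pos_diagonals n w d \<subseteq> {0..<int n}"
    by (auto simp: band_neg_diagonals_def band_pos_diagonals_def)
qed (use assms band_matrix_neg_diagonal band_matrix_pos_diagonal band_diagonals_disjoint
      card_band_diagonals in auto)

lemma exists_band_parameters:
  fixes n a t :: nat
  assumes "2 * a < n" "t \<le> a * (n - 1 - a)"
  shows "\<exists>w d. w \<le> a \<and> 2 * w + d < n \<and> (0 < d \<longrightarrow> 0 < w) \<and> t = w * (n - 1 - w) - d"
  using assms
proof (induction a)
  case 0
  then show ?case by auto
next
  case (Suc a)
  show ?case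
  proof (cases "t \<le> a * (n - 1 - a)")
    case True
    have "2 * a < n" using Suc.prems(1) by simp
    from Suc.IH[OF this True] show ?thesis using le_SucI by blast
  next
    case False
    have "2 * a + 3 \<le> n" using Suc.prems(1) by simp
    then obtain m where n: "n = 2 * a + 3 + m" using le_Suc_ex by blast
    have step: "Suc a * (n - 1 - Suc a) = a * (n - 1 - a) + Suc m"
      unfolding n by (simp add: algebra_simps)
    define d where "d = Suc a * (n - 1 - Suc a) - t"
    have "d \<le> m" using False step unfolding d_def by arith
    then have "2 * Suc a + d < n" using n by simp
    moreover have "t = Suc a * (n - 1 - Suc a) - d" using Suc.prems(2) unfolding d_def by simp
    ultimately show ?thesis by blast
  qed
qed

theorem mainTheorem13:
  fixes n k t :: nat
  assumes "1 \<le> k" and "k \<le> n" and "t \<le> (k - 1) * (n - k)"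
  shows "\<exists>(A :: nat \<Rightarrow> nat \<Rightarrow> int) (P :: nat \<Rightarrow> nat \<Rightarrow> nat \<Rightarrow> int).
           is_ASM n A \<and> num_neg_ones n A = t \<and>
           (\<forall>s < n. s \<noteq> k - 1 \<longrightarrow> is_perm_matrix n (P s)) \<and>
           is_ASHM n (\<lambda>s. if s = k - 1 then A else P s)"
proof -
  define a where "a = min (k - 1) (n - k)"
  have "2 * a < n" "t \<le> a * (n - 1 - a)"
    using assms by (auto simp: a_def min_def mult.commute)
  then obtain w d where wd: "w \<le> a" "2 * w + d < n" "0 < d \<longrightarrow> 0 < w" "t = w * (n - 1 - w) - d"
    using exists_band_parameters by blast
  let ?A = "band_matrix n w d"
  have A: "is_ASM n ?A" "num_neg_ones n ?A = t"
    using band_matrix_is_ASM[OF wd(2,3)] num_neg_ones_band_matrix[OF wd(2,3)] wd(4) by simp_all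
  obtain M where M: "regular_01_matrix n a M" "compatible n ?A M"
    using band_matrix_compatible_regular[OF wd(2,3,1) \<open>2 * a < n\<close>] by blast
  obtain L where L: "regular_01_matrix n (k - 1) L" "compatible n ?A L"
  proof (cases "a = k - 1")
    case True
    then show ?thesis using M that by blast
  next
    case False
    then have "a = n - k" "a < n" "n - 1 - a = k - 1" using assms(1,2) by (auto simp: a_def)
    then show ?thesis using regular_01_matrix_complement[OF A(1) M] that by metis
  qed
  then show ?thesis using exists_ASHM_extension[OF assms(1,2) A(1) L] A by blast
qed

end
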